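(* Let $k\ge2$, $d=2^k+1$, and let $f(x)=x^d+g(x)$ with $g(x)=\sum_{j=0}^{2^{k-1}+1}a_jx^j\in\mathbb{F}_q[x]$ (so $\deg g\le 2^{k-1}+1$). Suppose there is an index $j$ with $a_j\neq0$ such that $\phi_j(x,y,z)$ is absolutely irreducible. Then $\phi(x,y,z)$ is absolutely irreducible.
   Context: Let $q=2^m$. For an integer $j\ge0$ let $\phi_j(x,y,z)=\dfrac{x^j+y^j+z^j+(x+y+z)^j}{(x+y)(x+z)(y+z)}$, a homogeneous polynomial of degree $j-3$ over $\mathbb{F}_2$. For $f\in\mathbb{F}_q[x]$ let $\phi(x,y,z)=\dfrac{f(x)+f(y)+f(z)+f(x+y+z)}{(x+y)(x+z)(y+z)}\in\mathbb{F}_q[x,y,z]$. Absolutely irreducible means irreducible (and nonconstant) over $\overline{\mathbb{F}_q}$. *)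

theory Defs
  imports "HOL-Algebra.Algebraic_Closure_Type"
begin

text \<open>Trivariate polynomials K[x,y,z] are represented as nested univariate polynomials
  ((K[z])[y])[x]: the outermost variable is x, the middle one y, the innermost z.\<close>

type_synonym 'a tpoly = "'a poly poly poly"

definition tconst :: "'a::zero \<Rightarrow> 'a tpoly" where
  "tconst c = [:[:[:c:]:]:]"

definition varX :: "'a::comm_semiring_1 tpoly" where "varX = [:0, 1:]"
definition varY :: "'a::comm_semiring_1 tpoly" where "varY = [:[:0, 1:]:]"
definition varZ :: "'a::comm_semiring_1 tpoly" where "varZ = [:[:[:0, 1:]:]:]"

definition subst3 :: "'a::comm_ring_1 poly \<Rightarrow> 'a tpoly \<Rightarrow> 'a tpoly" where
  "subst3 f t = poly (map_poly tconst f) t"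

text \<open>phi for f: (f(x)+f(y)+f(z)+f(x+y+z)) / ((x+y)(x+z)(y+z)) (exact division).\<close>
definition phi_of :: "'a::field poly \<Rightarrow> 'a tpoly" where
  "phi_of f = (subst3 f varX + subst3 f varY + subst3 f varZ + subst3 f (varX + varY + varZ))
      div ((varX + varY) * (varX + varZ) * (varY + varZ))"

text \<open>phi_j: the polynomial phi for f = x^j (its coefficients lie in the prime field F_2).\<close>
definition phi_j :: "nat \<Rightarrow> 'a::field tpoly" where
  "phi_j j = phi_of (monom 1 j)"

definition abs_irreducible :: "'a::field tpoly \<Rightarrow> bool" where
  "abs_irreducible P \<longleftrightarrow> irreducible (map_poly (map_poly (map_poly to_ac)) P)"

end

theory Submission
  imports Defs "HOL-Number_Theory.Residues"
begin

(* Work over the algebraic closure K of F_q (characteristic 2); the statement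
   over F_q is transported there at the very end, since phi_of commutes with field embeddings.
   Write phi = phi_of f and expand it as phi = sum_j f_j phi_j, where phi_j is homogeneous of
   degree j - 3.  The homogeneous decomposition h(tx,ty,tz) = sum_i h_i t^i (the map
   homog_parts below) is a ring homomorphism K[x,y,z] -> K[x,y,z][t], so a factorisation
   phi = P Q induces a factorisation of the graded polynomial.  For d = 2^k + 1 the top piece phi_d is a product
   of 2^k - 2 distinct linear factors x + rho(y,z), while the degree bound on g makes all pieces
   of degree between (deg phi)/2 and deg phi vanish.  Comparing graded pieces (gap lemma) forces
   the factor Q of smaller degree to be homogeneous and a product of such linear factors.  Then
   Q divides the graded piece f_j phi_j coming from the index j of the hypothesis, hence Q is
   associate to the irreducible phi_j, so phi_j is homogeneous of degree 1, i.e. j = 4; but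
   phi_4 = 0 in characteristic 2.  The file develops, in this order: ring homomorphisms given as
   functions, characteristic 2, products of linear factors and the gap lemma, the homogeneous
   decomposition, the numerators N_j and their quotients phi_j, the splitting of phi_(2^k+1),
   and finally the irreducibility argument over K and its transfer from F_q. *)

section \<open>Ring homomorphisms given as functions\<close>

definition is_ring_hom :: "('a::comm_ring_1 \<Rightarrow> 'b::comm_ring_1) \<Rightarrow> bool" where
  "is_ring_hom h \<longleftrightarrow> h 0 = 0 \<and> h 1 = 1 \<and>
     (\<forall>a b. h (a + b) = h a + h b) \<and> (\<forall>a b. h (a * b) = h a * h b)"

lemma is_ring_homD:
  assumes "is_ring_hom h"
  shows "h 0 = 0" "h 1 = 1" "h (a + b) = h a + h b" "h (a * b) = h a * h b"
  using assms unfolding is_ring_hom_def by auto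

lemma ring_hom_minus: assumes "is_ring_hom h" shows "h (- a) = - h a"
proof -
  have "h (- a) + h a = 0" using is_ring_homD(3)[OF assms, of "- a" a] is_ring_homD(1)[OF assms] by simp
  thus ?thesis by (simp add: eq_neg_iff_add_eq_0)
qed

lemma ring_hom_power: assumes "is_ring_hom h" shows "h (a ^ n) = h a ^ n"
  by (induction n) (simp_all add: is_ring_homD[OF assms])

lemma ring_hom_sum: assumes "is_ring_hom h" shows "h (sum g A) = (\<Sum>x\<in>A. h (g x))"
  by (induction A rule: infinite_finite_induct) (simp_all add: is_ring_homD[OF assms])

lemma is_ring_hom_comp: "is_ring_hom h \<Longrightarrow> is_ring_hom h' \<Longrightarrow> is_ring_hom (\<lambda>x. h' (h x))"
  unfolding is_ring_hom_def by auto

lemma is_ring_hom_pCons_const: "is_ring_hom (\<lambda>a. [:a:])"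
  unfolding is_ring_hom_def by (auto simp: one_pCons)

lemma is_ring_hom_poly: "is_ring_hom (\<lambda>p. poly p v)"
  unfolding is_ring_hom_def by auto

lemma map_poly_add_hom:
  assumes "is_ring_hom h" shows "map_poly h (p + q) = map_poly h p + map_poly h q"
  by (rule poly_eqI) (simp add: coeff_map_poly is_ring_homD[OF assms])

lemma map_poly_mult_hom:
  assumes "is_ring_hom h" shows "map_poly h (p * q) = map_poly h p * map_poly h q"
proof (induction p)
  case 0 then show ?case by (simp add: is_ring_homD[OF assms])
next
  case (pCons a p)
  have "map_poly h (pCons a p * q) = map_poly h (smult a q + pCons 0 (p * q))" by simp
  also have "\<dots> = smult (h a) (map_poly h q) + pCons 0 (map_poly h p * map_poly h q)"
    using pCons by (simp add: map_poly_add_hom[OF assms] map_poly_smult map_poly_pCons is_ring_homD[OF assms])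
  also have "\<dots> = map_poly h (pCons a p) * map_poly h q"
    by (simp add: map_poly_pCons is_ring_homD[OF assms])
  finally show ?case .
qed

lemma is_ring_hom_map_poly: assumes "is_ring_hom h" shows "is_ring_hom (map_poly h)"
  unfolding is_ring_hom_def
  by (auto simp: is_ring_homD[OF assms] map_poly_mult_hom[OF assms] map_poly_add_hom[OF assms])

lemma is_ring_hom_poly_map: "is_ring_hom h \<Longrightarrow> is_ring_hom (\<lambda>p. poly (map_poly h p) v)"
  using is_ring_hom_comp[OF is_ring_hom_map_poly is_ring_hom_poly] by blast

lemma ring_hom_poly_commute:
  assumes "is_ring_hom h" shows "h (poly p v) = poly (map_poly h p) (h v)"
  by (induction p) (simp_all add: map_poly_pCons is_ring_homD[OF assms])

lemma ring_hom_eq_0_iff: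
  fixes h :: "'a::field \<Rightarrow> 'b::field"
  assumes "is_ring_hom h" shows "h x = 0 \<longleftrightarrow> x = 0"
proof
  assume hx: "h x = 0"
  show "x = 0"
  proof (rule ccontr)
    assume "x \<noteq> 0"
    hence "h x * h (inverse x) = 1"
      using is_ring_homD(4)[OF assms, of x "inverse x"] is_ring_homD(2)[OF assms] by simp
    thus False using hx by simp
  qed
qed (simp add: is_ring_homD[OF assms])

section \<open>Characteristic 2\<close>

lemma char2_neg: assumes "(2::'b::comm_ring_1) = 0" shows "- (a::'b) = a"
proof -
  have "a + a = 2 * a" by simp
  hence "a + a = 0" using assms by simp
  thus ?thesis by (simp add: add_eq_0_iff2 eq_neg_iff_add_eq_0)
qed

lemma char2_add_self: "(2::'b::comm_ring_1) = 0 \<Longrightarrow> (a::'b) + a = 0"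
  by (metis mult_2 mult_zero_left)

lemma frobenius_add: assumes "(2::'b::comm_ring_1) = 0"
  shows "((a::'b) + b) ^ (2 ^ n) = a ^ (2 ^ n) + b ^ (2 ^ n)"
proof (induction n arbitrary: a b)
  case 0 then show ?case by simp
next
  case (Suc n)
  have sq: "(x + y)^2 = x^2 + y^2" for x y :: 'b
  proof -
    have "(x+y)^2 = x^2 + y^2 + 2 * (x*y)" by (simp add: power2_eq_square algebra_simps)
    thus ?thesis using assms by simp
  qed
  have "(a+b)^(2^Suc n) = ((a+b)^(2^n))^2" by (simp add: power_mult[symmetric] mult.commute)
  also have "\<dots> = (a^(2^n))^2 + (b^(2^n))^2" using Suc sq by simp
  also have "\<dots> = a^(2^Suc n) + b^(2^Suc n)" by (simp add: power_mult[symmetric] mult.commute)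
  finally show ?case .
qed

lemma char2_poly: assumes "(2::'b::comm_ring_1) = 0" shows "(2::'b poly) = 0"
proof -
  have "(2::'b poly) = 1 + 1" by simp
  also have "\<dots> = [:1 + 1:]" by (simp add: one_pCons)
  finally have "(2::'b poly) = [:2:]" by simp
  with assms show ?thesis by simp
qed

lemma char2_of_card:
  assumes "card (UNIV :: 'a::{field,finite} set) = 2 ^ m"
  shows "(2::'a) = 0"
proof -
  have pr: "prime CHAR('a)" by (rule prime_CHAR_semidom[OF finite_imp_CHAR_pos]) simp
  have "CHAR('a) dvd 2 ^ m" using CHAR_dvd_CARD[where 'a='a] assms by simp
  hence "CHAR('a) dvd 2" using pr prime_dvd_power by blast
  hence "CHAR('a) \<le> 2" by (rule dvd_imp_le) simp
  moreover have "CHAR('a) > 1" using pr by (rule prime_gt_1_nat)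
  ultimately have "CHAR('a) = 2" by simp
  thus ?thesis by (metis of_nat_CHAR of_nat_numeral)
qed


section \<open>Products of distinct linear factors\<close>

lemma roots_prod_dvd:
  fixes p :: "'r::idom poly"
  assumes "finite B" "\<forall>b\<in>B. poly p b = 0"
  shows "(\<Prod>b\<in>B. [:-b,1:]) dvd p"
  using assms
proof (induction B arbitrary: p rule: finite_induct)
  case empty then show ?case by simp
next
  case (insert b B)
  from insert.prems have "poly p b = 0" by simp
  then obtain p' where p': "p = [:-b,1:] * p'" by (auto simp: poly_eq_0_iff_dvd elim: dvdE)
  have "\<forall>c\<in>B. poly p' c = 0"
  proof
    fix c assume c: "c \<in> B"
    hence "c \<noteq> b" using insert.hyps by auto
    moreover have "poly p c = 0" using insert.prems c by simp
    ultimately show "poly p' c = 0" using p' by simp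
  qed
  from insert.IH[OF this] have "(\<Prod>b\<in>B. [:-b,1:]) dvd p'" .
  moreover have "(\<Prod>b\<in>insert b B. [:-b,1:]) = [:-b,1:] * (\<Prod>b\<in>B. [:-b,1:])"
    using insert.hyps by simp
  ultimately show ?case using p' by (metis mult_dvd_mono dvd_refl)
qed

lemma degree_linprod: "finite B \<Longrightarrow> degree (\<Prod>b\<in>B. [:-b,1::'r::idom:]) = card B"
  by (subst degree_prod_eq_sum_degree) auto

lemma monic_linprod: "lead_coeff (\<Prod>b\<in>B. [:-b,1::'r::idom:]) = 1"
  by (simp add: lead_coeff_prod)

lemma linprod_nz: "(\<Prod>b\<in>B. [:-b,1::'r::idom:]) \<noteq> 0"
  using monic_linprod[of B] by (metis leading_coeff_0_iff zero_neq_one)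

lemma poly_linprod_nz:
  fixes a :: "'r::idom"
  assumes "finite B" "a \<notin> B" "c \<noteq> 0"
  shows "poly (smult c (\<Prod>b\<in>B. [:-b,1:])) a \<noteq> 0"
  using assms by (auto simp: poly_prod)

lemma split_linprod:
  fixes p q :: "'r::idom poly"
  assumes "finite A" "p * q = (\<Prod>a\<in>A. [:-a,1:])"
  shows "\<exists>A1 A2 c1 c2. A1 \<union> A2 = A \<and> A1 \<inter> A2 = {} \<and> p = smult c1 (\<Prod>a\<in>A1. [:-a,1:])
          \<and> q = smult c2 (\<Prod>a\<in>A2. [:-a,1:]) \<and> c1 * c2 = 1"
  using assms
proof (induction A arbitrary: p q rule: finite_induct)
  case empty
  hence "p dvd 1" "q dvd 1" by (metis dvd_triv_left prod.empty, metis dvd_triv_right prod.empty)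
  then obtain c1 c2 where "p = [:c1:]" "q = [:c2:]" by (auto elim!: is_unit_polyE)
  moreover from this empty have "[:c1 * c2:] = [:1:]" by (simp add: one_pCons mult.commute)
  ultimately show ?case
    by (intro exI[of _ "{}"] exI[of _ "{}"] exI[of _ c1] exI[of _ c2]) (auto simp: mult.commute)
next
  case (insert a A)
  have eq: "p * q = [:-a,1:] * (\<Prod>a\<in>A. [:-a,1:])" using insert by simp
  hence "poly (p*q) a = 0" by simp
  hence "poly p a = 0 \<or> poly q a = 0" by simp
  thus ?case
  proof
    assume "poly p a = 0"
    then obtain p' where p': "p = [:-a,1:] * p'" by (auto simp: poly_eq_0_iff_dvd elim: dvdE)
    with eq have "[:-a,1:] * (p' * q) = [:-a,1:] * (\<Prod>a\<in>A. [:-a,1:])" by (metis mult.assoc)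
    hence "p' * q = (\<Prod>a\<in>A. [:-a,1:])" by (subst (asm) mult_left_cancel) auto
    from insert.IH[OF this] obtain A1 A2 c1 c2 where h: "A1 \<union> A2 = A" "A1 \<inter> A2 = {}"
      "p' = smult c1 (\<Prod>a\<in>A1. [:-a,1:])" "q = smult c2 (\<Prod>a\<in>A2. [:-a,1:])" "c1 * c2 = 1" by blast
    have "a \<notin> A1" "finite A1" using h(1) insert.hyps by auto
    hence "p = smult c1 (\<Prod>a\<in>insert a A1. [:-a,1:])" using p' h(3) by (simp add: mult_smult_right)
    thus ?thesis using h insert.hyps
      by (intro exI[of _ "insert a A1"] exI[of _ A2] exI[of _ c1] exI[of _ c2]) auto
  next
    assume "poly q a = 0"
    then obtain q' where q': "q = [:-a,1:] * q'" by (auto simp: poly_eq_0_iff_dvd elim: dvdE)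
    with eq have "[:-a,1:] * (p * q') = [:-a,1:] * (\<Prod>a\<in>A. [:-a,1:])" by (metis mult.left_commute)
    hence "p * q' = (\<Prod>a\<in>A. [:-a,1:])" by (subst (asm) mult_left_cancel) auto
    from insert.IH[OF this] obtain A1 A2 c1 c2 where h: "A1 \<union> A2 = A" "A1 \<inter> A2 = {}"
      "p = smult c1 (\<Prod>a\<in>A1. [:-a,1:])" "q' = smult c2 (\<Prod>a\<in>A2. [:-a,1:])" "c1 * c2 = 1" by blast
    have "a \<notin> A2" "finite A2" using h(1) insert.hyps by auto
    hence "q = smult c2 (\<Prod>a\<in>insert a A2. [:-a,1:])" using q' h(4) by (simp add: mult_smult_right)
    thus ?thesis using h insert.hyps
      by (intro exI[of _ A1] exI[of _ "insert a A2"] exI[of _ c1] exI[of _ c2]) auto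
  qed
qed

lemma irreducible_linprod_card:
  fixes c :: "'r::idom"
  assumes irr: "irreducible (smult c (\<Prod>a\<in>B. [:-a,1:]))" and c: "c dvd 1" and fin: "finite B"
  shows "card B = 1"
proof -
  have c0: "c \<noteq> 0" using c by auto
  have "B \<noteq> {}"
  proof
    assume "B = {}"
    hence "smult c (\<Prod>a\<in>B. [:-a,1:]) = [:c:]" by simp
    thus False using irreducible_not_unit[OF irr] c by (simp add: is_unit_const_poly_iff)
  qed
  then obtain a where a: "a \<in> B" by blast
  have split: "smult c (\<Prod>a\<in>B. [:-a,1:]) = [:-a,1:] * smult c (\<Prod>a\<in>B-{a}. [:-a,1:])"
    unfolding prod.remove[OF fin a] by (simp add: mult_smult_right)
  have "\<not> [:-a,1:] dvd 1" by (auto elim!: is_unit_polyE)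
  hence "smult c (\<Prod>a\<in>B-{a}. [:-a,1:]) dvd 1" using irreducibleD[OF irr split] by blast
  then obtain u where "smult c (\<Prod>a\<in>B-{a}. [:-a,1:]) = [:u:]" by (rule is_unit_polyE)
  hence "degree (smult c (\<Prod>a\<in>B-{a}. [:-a,1:])) = 0" by (metis degree_pCons_0)
  hence "card (B - {a}) = 0" using c0 fin by (simp add: degree_linprod)
  moreover have "card B \<noteq> 0" using a fin by auto
  ultimately show ?thesis using card_Diff_singleton[OF a] by linarith
qed

text \<open>Coefficient of index s + t - n of a product of polynomials of degrees s \<ge> t, when the
  coefficients of the first factor of indices s - n + 1, ..., s - 1 vanish: only the two
  products involving a leading coefficient survive.\<close>
lemma coeff_mult_gap:
  fixes Sp Sq :: "'r::comm_semiring_0 poly"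
  assumes ds: "degree Sp = s" and dt: "degree Sq = t" and ts: "t \<le> s" and N: "N \<le> t" "1 \<le> N"
    and van: "\<And>m. 1 \<le> m \<Longrightarrow> m < N \<Longrightarrow> coeff Sp (s - m) = 0"
  shows "coeff (Sp * Sq) (s + t - N) = coeff Sp (s - N) * lead_coeff Sq + lead_coeff Sp * coeff Sq (t - N)"
proof -
  define nn where "nn = s + t - N"
  define f where "f i = coeff Sp i * coeff Sq (nn - i)" for i
  have "coeff (Sp*Sq) nn = (\<Sum>i\<le>nn. f i)" unfolding f_def by (simp add: coeff_mult)
  also have "\<dots> = (\<Sum>i\<in>{s-N, s}. f i)"
  proof (rule sum.mono_neutral_right)
    show "{s - N, s} \<subseteq> {..nn}" using N ts unfolding nn_def by auto
    show "\<forall>i\<in>{..nn} - {s - N, s}. f i = 0"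
    proof
      fix i assume i: "i \<in> {..nn} - {s - N, s}"
      consider "s < i" | "i < s - N" | "s - N < i" "i < s" using i by fastforce
      then show "f i = 0"
      proof cases
        case 1 then show ?thesis unfolding f_def using ds by (simp add: coeff_eq_0)
      next
        case 2
        hence "nn - i > t" unfolding nn_def using N ts by auto
        then show ?thesis unfolding f_def using dt by (simp add: coeff_eq_0)
      next
        case 3
        hence "coeff Sp (s - (s - i)) = 0" using van[of "s - i"] by simp
        then show ?thesis unfolding f_def using 3 by simp
      qed
    qed
  qed simp
  also have "\<dots> = f (s - N) + f s" using N ts by (subst sum.insert) auto
  also have "nn - (s - N) = t" "nn - s = t - N" unfolding nn_def using N ts by auto
  hence "f (s - N) + f s = coeff Sp (s-N) * lead_coeff Sq + lead_coeff Sp * coeff Sq (t-N)"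
    unfolding f_def using ds dt by simp
  finally show ?thesis unfolding nn_def .
qed

text \<open>Induction on n kills the coefficients of index s - n and t - n,
  since both appear linearly next to the coprime leading coefficients.\<close>
lemma gap_forces_monomial_factor:
  fixes Sp Sq :: "'r::idom poly poly"
  assumes ds: "degree Sp = s" and dt: "degree Sq = t" and ts: "t \<le> s"
   and z: "\<And>n. 1 \<le> n \<Longrightarrow> n \<le> t \<Longrightarrow> coeff (Sp*Sq) (s+t-n) = 0"
   and fac: "lead_coeff Sp * lead_coeff Sq = (\<Prod>a\<in>A. [:-a,1:])" and fin: "finite A"
   and cA: "card A = s + t"
   and xp: "\<And>i. degree (coeff Sp i) \<le> i" and xq: "\<And>i. degree (coeff Sq i) \<le> i"
  shows "Sq = monom (lead_coeff Sq) t \<and> (\<exists>c A2. c dvd 1 \<and> A2 \<subseteq> A \<and> card A2 = t \<and>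
          lead_coeff Sq = smult c (\<Prod>a\<in>A2. [:-a,1:]))"
proof -
  define p0 where "p0 = lead_coeff Sp"
  define q0 where "q0 = lead_coeff Sq"
  obtain A1 A2 c1 c2 where sp: "A1 \<union> A2 = A" "A1 \<inter> A2 = {}"
    "p0 = smult c1 (\<Prod>a\<in>A1. [:-a,1:])" "q0 = smult c2 (\<Prod>a\<in>A2. [:-a,1:])" "c1 * c2 = 1"
    using split_linprod[OF fin fac] unfolding p0_def q0_def by blast
  have c1: "c1 \<noteq> 0" and c2: "c2 \<noteq> 0" using sp(5) by auto
  have f1: "finite A1" and f2: "finite A2" using sp(1) fin by auto
  have "degree p0 \<le> s" using xp[of s] ds unfolding p0_def by simp
  moreover have "degree q0 \<le> t" using xq[of t] dt unfolding q0_def by simp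
  moreover have "card A1 + card A2 = s + t" using cA sp(1,2) f1 f2 by (metis card_Un_disjoint)
  ultimately have cA1: "card A1 = s" and cA2: "card A2 = t"
    using sp(3,4) c1 c2 f1 f2 by (auto simp: degree_linprod)
  text \<open>A relation x q0 + p0 y = 0 with deg x < s (resp. deg y < t) forces x = 0 (resp. y = 0):
    the roots of p0 (resp. q0) are not roots of the coprime q0 (resp. p0).\<close>
  have vanish1: "x = 0" if "x * q0 + p0 * y = 0" "degree x < s" for x y
  proof (rule ccontr)
    assume xnz: "x \<noteq> 0"
    have "\<forall>a\<in>A1. poly x a = 0"
    proof
      fix a assume a: "a \<in> A1"
      have "poly p0 a = 0" using sp(3) a f1 by (simp add: poly_prod prod_zero_iff)
      moreover have "poly (x * q0 + p0 * y) a = 0" using that(1) by simp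
      moreover have "poly q0 a \<noteq> 0" using sp(2,4) a f2 c2 poly_linprod_nz by blast
      ultimately show "poly x a = 0" by simp
    qed
    from dvd_imp_degree_le[OF roots_prod_dvd[OF f1 this] xnz]
    have "card A1 \<le> degree x" using f1 by (simp add: degree_linprod)
    thus False using that(2) cA1 by simp
  qed
  have vanish2: "y = 0" if "x * q0 + p0 * y = 0" "degree y < t" for x y
  proof (rule ccontr)
    assume ynz: "y \<noteq> 0"
    have "\<forall>a\<in>A2. poly y a = 0"
    proof
      fix a assume a: "a \<in> A2"
      have "poly q0 a = 0" using sp(4) a f2 by (simp add: poly_prod prod_zero_iff)
      moreover have "poly (x * q0 + p0 * y) a = 0" using that(1) by simp
      moreover have "poly p0 a \<noteq> 0" using sp(2,3) a f1 c1 poly_linprod_nz by blast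
      ultimately show "poly y a = 0" by simp
    qed
    from dvd_imp_degree_le[OF roots_prod_dvd[OF f2 this] ynz]
    have "card A2 \<le> degree y" using f2 by (simp add: degree_linprod)
    thus False using that(2) cA2 by simp
  qed
  have key: "\<forall>m. 1 \<le> m \<and> m \<le> n \<longrightarrow> coeff Sp (s-m) = 0 \<and> coeff Sq (t-m) = 0" if "n \<le> t" for n
    using that
  proof (induction n)
    case 0 then show ?case by simp
  next
    case (Suc n)
    have IH: "\<And>m. 1 \<le> m \<Longrightarrow> m \<le> n \<Longrightarrow> coeff Sp (s-m) = 0 \<and> coeff Sq (t-m) = 0"
      using Suc by auto
    have "coeff (Sp * Sq) (s + t - Suc n) =
        coeff Sp (s - Suc n) * q0 + p0 * coeff Sq (t - Suc n)"
      unfolding p0_def q0_def using IH Suc.prems by (intro coeff_mult_gap[OF ds dt ts]) auto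
    hence eq: "coeff Sp (s - Suc n) * q0 + p0 * coeff Sq (t - Suc n) = 0"
      using z[of "Suc n"] Suc.prems by simp
    have "degree (coeff Sp (s - Suc n)) < s" using xp[of "s - Suc n"] Suc.prems ts by linarith
    from vanish1[OF eq this] have "coeff Sp (s - Suc n) = 0" .
    moreover have "degree (coeff Sq (t - Suc n)) < t" using xq[of "t - Suc n"] Suc.prems by linarith
    from vanish2[OF eq this] have "coeff Sq (t - Suc n) = 0" .
    ultimately show ?case using IH by (auto simp: le_Suc_eq)
  qed
  have "Sq = monom q0 t"
  proof (rule poly_eqI)
    fix i show "coeff Sq i = coeff (monom q0 t) i"
    proof (cases "i < t")
      case True
      hence "1 \<le> t - i \<and> t - i \<le> t" by auto
      hence "coeff Sq (t - (t-i)) = 0" using key[of t] by blast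
      thus ?thesis using True by simp
    next
      case False
      then show ?thesis using dt unfolding q0_def by (cases "i = t") (simp_all add: coeff_eq_0)
    qed
  qed
  moreover have "c2 dvd 1" using sp(5) by (metis dvd_triv_right)
  ultimately show ?thesis using sp cA2 unfolding q0_def by blast
qed


section \<open>Evaluation of trivariate polynomials and homogeneous decomposition\<close>

definition eval1 :: "('k::comm_ring_1 \<Rightarrow> 'b::comm_ring_1) \<Rightarrow> 'b \<Rightarrow> 'k poly \<Rightarrow> 'b" where
  "eval1 u vz c = poly (map_poly u c) vz"
definition eval2 :: "('k::comm_ring_1 \<Rightarrow> 'b::comm_ring_1) \<Rightarrow> 'b \<Rightarrow> 'b \<Rightarrow> 'k poly poly \<Rightarrow> 'b" where
  "eval2 u vy vz b = poly (map_poly (eval1 u vz) b) vy"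
definition eval3 :: "('k::comm_ring_1 \<Rightarrow> 'b::comm_ring_1) \<Rightarrow> 'b \<Rightarrow> 'b \<Rightarrow> 'b \<Rightarrow> 'k tpoly \<Rightarrow> 'b" where
  "eval3 u vx vy vz h = poly (map_poly (eval2 u vy vz) h) vx"

lemma is_ring_hom_eval1: "is_ring_hom u \<Longrightarrow> is_ring_hom (eval1 u vz)"
  unfolding eval1_def[abs_def] by (rule is_ring_hom_poly_map)
lemma is_ring_hom_eval2: "is_ring_hom u \<Longrightarrow> is_ring_hom (eval2 u vy vz)"
  unfolding eval2_def[abs_def] by (rule is_ring_hom_poly_map[OF is_ring_hom_eval1])
lemma is_ring_hom_eval3: "is_ring_hom u \<Longrightarrow> is_ring_hom (eval3 u vx vy vz)"
  unfolding eval3_def[abs_def] by (rule is_ring_hom_poly_map[OF is_ring_hom_eval2])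

lemma eval_poly_commute:
  assumes "is_ring_hom \<Psi>" "is_ring_hom g"
  shows "\<Psi> (poly (map_poly g p) v) = poly (map_poly (\<lambda>x. \<Psi> (g x)) p) (\<Psi> v)"
  using ring_hom_poly_commute[OF assms(1)] map_poly_map_poly[of \<Psi> g p] is_ring_homD(1)[OF assms(1)]
     is_ring_homD(1)[OF assms(2)] by (simp add: o_def)

lemma eval3_commute:
  assumes "is_ring_hom \<Psi>" "is_ring_hom u"
  shows "\<Psi> (eval3 u vx vy vz h) = eval3 (\<lambda>a. \<Psi> (u a)) (\<Psi> vx) (\<Psi> vy) (\<Psi> vz) h"
proof -
  have 1: "\<Psi> (eval1 u vz c) = eval1 (\<lambda>a. \<Psi> (u a)) (\<Psi> vz) c" for c
    unfolding eval1_def by (rule eval_poly_commute[OF assms])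
  have 2: "\<Psi> (eval2 u vy vz b) = eval2 (\<lambda>a. \<Psi> (u a)) (\<Psi> vy) (\<Psi> vz) b" for b
    unfolding eval2_def by (subst eval_poly_commute[OF assms(1) is_ring_hom_eval1[OF assms(2)]]) (simp add: 1)
  show ?thesis
    unfolding eval3_def by (subst eval_poly_commute[OF assms(1) is_ring_hom_eval2[OF assms(2)]]) (simp add: 2)
qed

lemma tconst_0[simp]: "tconst 0 = 0" by (simp add: tconst_def)
lemma tconst_1[simp]: "tconst 1 = 1" by (simp add: tconst_def one_pCons)
lemma is_ring_hom_tconst: "is_ring_hom (tconst :: 'k::comm_ring_1 \<Rightarrow> 'k tpoly)"
  unfolding is_ring_hom_def tconst_def by (auto simp: one_pCons)

lemma is_ring_hom_tconst_const: "is_ring_hom (\<lambda>a. [:tconst a:] :: 'k::comm_ring_1 tpoly poly)"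
  by (rule is_ring_hom_comp[OF is_ring_hom_tconst is_ring_hom_pCons_const])

lemma eval1_id: "eval1 tconst varZ c = [:[:c:]:]"
  unfolding eval1_def
  by (induction c) (simp_all add: map_poly_pCons tconst_def varZ_def)

lemma eval2_id: "eval2 tconst varY varZ b = [:b:]"
  unfolding eval2_def
proof (induction b)
  case 0 then show ?case by simp
next
  case (pCons a b)
  have "eval1 tconst varZ 0 = 0" by (simp add: eval1_def)
  then show ?case using pCons by (simp add: map_poly_pCons eval1_id varY_def)
qed

lemma eval3_id: "eval3 tconst varX varY varZ h = h"
  unfolding eval3_def
proof (induction h)
  case 0 then show ?case by simp
next
  case (pCons a h)
  have "eval2 tconst varY varZ 0 = 0" by (simp add: eval2_def)
  then show ?case using pCons by (simp add: map_poly_pCons eval2_id varX_def)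
qed

text \<open>The homogeneous decomposition: homog_parts h = h(tx, ty, tz), a polynomial in a new
  variable t whose coefficient of t^i is the homogeneous component of h of degree i.\<close>
definition homog_parts :: "'k::comm_ring_1 tpoly \<Rightarrow> 'k tpoly poly" where
  "homog_parts = eval3 (\<lambda>a. [:tconst a:]) (monom varX 1) (monom varY 1) (monom varZ 1)"

lemma is_ring_hom_homog_parts: "is_ring_hom homog_parts"
  unfolding homog_parts_def by (rule is_ring_hom_eval3[OF is_ring_hom_tconst_const])

lemma homog_parts_add: "homog_parts (a + b) = homog_parts a + homog_parts b"
  using is_ring_homD(3)[OF is_ring_hom_homog_parts] .
lemma homog_parts_mult: "homog_parts (a * b) = homog_parts a * homog_parts b"
  using is_ring_homD(4)[OF is_ring_hom_homog_parts] .
lemma homog_parts_power: "homog_parts (a ^ n) = homog_parts a ^ n"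
  using ring_hom_power[OF is_ring_hom_homog_parts] .

lemma poly_homog_parts_1: "poly (homog_parts h) 1 = h"
proof -
  have "poly (homog_parts h) 1 = eval3 (\<lambda>a. poly [:tconst a:] 1) (poly (monom varX 1) 1) (poly (monom varY 1) 1)
           (poly (monom varZ 1) 1) h"
    unfolding homog_parts_def by (rule eval3_commute[OF is_ring_hom_poly is_ring_hom_tconst_const])
  also have "\<dots> = eval3 tconst varX varY varZ h" by (simp add: poly_monom)
  finally show ?thesis by (simp add: eval3_id)
qed

lemma homog_parts_tconst: "homog_parts (tconst c) = [:tconst c:]"
  unfolding homog_parts_def eval3_def eval2_def eval1_def tconst_def by (simp add: map_poly_pCons)

lemma homog_parts_eq_0: "homog_parts h = 0 \<Longrightarrow> h = 0"
  using poly_homog_parts_1[of h] by simp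

lemma eval2_0: "is_ring_hom u \<Longrightarrow> eval2 u vy vz 0 = 0"
  using is_ring_homD(1)[OF is_ring_hom_eval2] by blast
lemma eval2_1: "is_ring_hom u \<Longrightarrow> eval2 u vy vz 1 = 1"
  using is_ring_homD(2)[OF is_ring_hom_eval2] by blast
lemma eval1_0: "is_ring_hom u \<Longrightarrow> eval1 u vz 0 = 0"
  using is_ring_homD(1)[OF is_ring_hom_eval1] by blast
lemma eval1_1: "is_ring_hom u \<Longrightarrow> eval1 u vz 1 = 1"
  using is_ring_homD(2)[OF is_ring_hom_eval1] by blast

lemma homog_parts_varX: "homog_parts varX = monom varX 1"
proof -
  have r: "is_ring_hom (\<lambda>a. [:tconst a:] :: 'a tpoly poly)" by (rule is_ring_hom_tconst_const)
  show ?thesis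
    unfolding homog_parts_def eval3_def varX_def
    using eval2_0[OF r] eval2_1[OF r] by (simp add: map_poly_pCons one_pCons[symmetric])
qed

lemma homog_parts_varY: "homog_parts varY = monom varY 1"
proof -
  have r: "is_ring_hom (\<lambda>a. [:tconst a:] :: 'a tpoly poly)" by (rule is_ring_hom_tconst_const)
  show ?thesis
    unfolding homog_parts_def eval3_def eval2_def varY_def
    using eval1_0[OF r] eval1_1[OF r] by (simp add: map_poly_pCons one_pCons[symmetric])
qed

lemma homog_parts_varZ: "homog_parts varZ = monom varZ 1"
  unfolding homog_parts_def eval3_def eval2_def eval1_def varZ_def
  by (simp add: map_poly_pCons tconst_def one_pCons[symmetric])

definition x_free :: "'k::comm_ring_1 tpoly poly \<Rightarrow> bool" where
  "x_free P \<longleftrightarrow> (\<forall>i. degree (coeff P i) = 0)"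

lemma x_free_add: "x_free P \<Longrightarrow> x_free Q \<Longrightarrow> x_free (P + Q)"
  unfolding x_free_def by (metis coeff_add degree_add_le le_zero_eq)

lemma x_free_mult: "x_free P \<Longrightarrow> x_free Q \<Longrightarrow> x_free (P * Q)"
  unfolding x_free_def coeff_mult
  by (metis (no_types, lifting) bot_nat_0.extremum_uniqueI degree_mult_le degree_sum_le finite_atMost
       add_0)

lemma x_free_const: "degree c = 0 \<Longrightarrow> x_free [:c:]"
  unfolding x_free_def by (auto simp: coeff_pCons split: nat.splits)

lemma x_free_monom: "degree c = 0 \<Longrightarrow> x_free (monom c n)"
  unfolding x_free_def by (auto simp: coeff_monom)

lemma x_free_eval2: "x_free (eval2 (\<lambda>a. [:tconst a:]) (monom varY 1) (monom varZ 1) b)"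
proof -
  have e1: "x_free (eval1 (\<lambda>a. [:tconst a:]) (monom varZ 1) c)" for c :: "'a poly"
    unfolding eval1_def
  proof (induction c)
    case 0 then show ?case by (simp add: x_free_def)
  next
    case (pCons a c)
    have "poly (map_poly (\<lambda>a. [:tconst a:]) (pCons a c)) (monom varZ 1)
       = [:tconst a:] + monom varZ 1 * poly (map_poly (\<lambda>a. [:tconst a:]) c) (monom varZ 1)"
      by (simp add: map_poly_pCons)
    moreover have "x_free [:tconst a:]" by (rule x_free_const) (simp add: tconst_def)
    moreover have "x_free (monom varZ 1 :: 'a tpoly poly)" by (rule x_free_monom) (simp add: varZ_def)
    ultimately show ?case using pCons by (simp add: x_free_add x_free_mult)
  qed
  show ?thesis unfolding eval2_def
  proof (induction b)
    case 0 then show ?case by (simp add: x_free_def)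
  next
    case (pCons a b)
    have "poly (map_poly (eval1 (\<lambda>a. [:tconst a:]) (monom varZ 1)) (pCons a b)) (monom varY 1)
       = eval1 (\<lambda>a. [:tconst a:]) (monom varZ 1) a
         + monom varY 1 * poly (map_poly (eval1 (\<lambda>a. [:tconst a:]) (monom varZ 1)) b) (monom varY 1)"
      by (simp add: map_poly_pCons eval1_0[OF is_ring_hom_tconst_const])
    moreover have "x_free (monom varY 1 :: 'a tpoly poly)" by (rule x_free_monom) (simp add: varY_def)
    ultimately show ?case using pCons e1 by (simp add: x_free_add x_free_mult)
  qed
qed

lemma homog_parts_xdeg: "degree (coeff (homog_parts h) i) \<le> i"
  unfolding homog_parts_def eval3_def
proof (induction h arbitrary: i)
  case 0 then show ?case by simp
next
  case (pCons b h)
  let ?E = "eval2 (\<lambda>a. [:tconst a:]) (monom varY 1) (monom varZ 1)"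
  let ?T = "poly (map_poly ?E h) (monom varX 1)"
  have eq: "poly (map_poly ?E (pCons b h)) (monom varX 1) = ?E b + monom varX 1 * ?T"
    by (simp add: map_poly_pCons eval2_0[OF is_ring_hom_tconst_const])
  have d1: "degree (coeff (?E b) i) = 0" using x_free_eval2[of b] unfolding x_free_def by blast
  have d2: "degree (coeff (monom varX 1 * ?T) i) \<le> i"
  proof (cases i)
    case 0 then show ?thesis by (simp add: coeff_monom_mult)
  next
    case (Suc i')
    have "degree (varX * coeff ?T i') \<le> degree (varX::'a tpoly) + degree (coeff ?T i')"
      by (rule degree_mult_le)
    also have "\<dots> \<le> 1 + i'" using pCons.IH[of i'] by (simp add: varX_def)
    finally show ?thesis using Suc by (simp add: coeff_monom_mult)
  qed
  show ?case unfolding eq coeff_add using d1 d2 by (metis degree_add_le le0 add_0)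
qed

lemma homog_parts_unit:
  fixes w :: "'k::idom tpoly"
  assumes "w dvd 1" shows "\<exists>v. v \<noteq> 0 \<and> homog_parts w = [:v:]"
proof -
  obtain w' where "1 = w * w'" using assms by (rule dvdE)
  hence "homog_parts w * homog_parts w' = 1"
    using homog_parts_mult[of w w'] is_ring_homD(2)[OF is_ring_hom_homog_parts] by metis
  hence "homog_parts w dvd 1" by (metis dvd_triv_left)
  then obtain v where "homog_parts w = [:v:]" "v dvd 1" by (rule is_unit_polyE)
  thus ?thesis by auto
qed


section \<open>The numerators N_j and the polynomials phi_j\<close>

definition numer :: "nat \<Rightarrow> 'k::comm_ring_1 tpoly" where
  "numer j = varX ^ j + varY ^ j + varZ ^ j + (varX + varY + varZ) ^ j"

definition denom :: "'k::comm_ring_1 tpoly" where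
  "denom = (varX + varY) * (varX + varZ) * (varY + varZ)"

lemma homog_parts_numer: "homog_parts (numer j) = monom (numer j) j"
  unfolding numer_def
  by (simp add: homog_parts_add homog_parts_power homog_parts_varX homog_parts_varY homog_parts_varZ
      add_monom monom_power)

lemma homog_parts_denom: "homog_parts denom = monom denom 3"
  unfolding denom_def
  by (simp add: homog_parts_add homog_parts_mult homog_parts_varX homog_parts_varY homog_parts_varZ
      add_monom mult_monom numeral_3_eq_3)

lemma homog_parts_quotient:
  fixes Phi :: "'k::idom tpoly"
  assumes "denom * Phi = N" "(denom::'k tpoly) \<noteq> 0" "homog_parts N = monom N j"
  shows "homog_parts Phi = monom Phi (j-3) \<and> (j < 3 \<longrightarrow> Phi = 0)"
proof -
  have e: "monom denom 3 * homog_parts Phi = monom (denom * Phi) j"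
    using assms(1,3) homog_parts_mult[of denom Phi] homog_parts_denom by metis
  show ?thesis
  proof (cases "j < 3")
    case True
    have "homog_parts Phi = 0"
    proof (rule ccontr)
      assume nz: "homog_parts Phi \<noteq> 0"
      have "degree (monom denom 3 * homog_parts Phi) = 3 + degree (homog_parts Phi)"
        using nz assms(2) by (simp add: degree_mult_eq degree_monom_eq)
      moreover have "degree (monom (denom * Phi) j) \<le> j" by (simp add: degree_monom_le)
      ultimately show False using e True by simp
    qed
    hence "Phi = 0" by (rule homog_parts_eq_0)
    thus ?thesis by (simp add: is_ring_homD(1)[OF is_ring_hom_homog_parts])
  next
    case False
    hence "monom (denom * Phi) j = monom denom 3 * monom Phi (j - 3)" by (simp add: mult_monom)
    with e have "monom denom 3 * homog_parts Phi = monom denom 3 * monom Phi (j - 3)" by simp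
    hence "homog_parts Phi = monom Phi (j-3)" using assms(2) by simp
    thus ?thesis using False by simp
  qed
qed

text \<open>y and z viewed as constants for the outer variable x.\<close>
definition yy :: "'k::comm_ring_1 poly poly" where "yy = [:0,1:]"
definition zz :: "'k::comm_ring_1 poly poly" where "zz = [:[:0,1:]:]"

lemma varY_yy: "varY = [:yy:]" by (simp add: varY_def yy_def)
lemma varZ_zz: "varZ = [:zz:]" by (simp add: varZ_def zz_def)

lemma poly_numer: "poly (numer j) v = v^j + yy^j + zz^j + (v + yy + zz)^j"
  by (simp add: numer_def varX_def varY_yy varZ_zz ac_simps)

lemma yy_ne_zz: "(yy::'k::comm_ring_1 poly poly) \<noteq> zz"
proof
  assume "(yy::'k poly poly) = zz" hence "coeff (yy::'k poly poly) 1 = coeff zz 1" by simp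
  thus False by (simp add: yy_def zz_def)
qed

lemma yy_zz_nz: "(yy::'k::comm_ring_1 poly poly) + zz \<noteq> 0"
proof
  assume "(yy::'k poly poly) + zz = 0" hence "coeff ((yy::'k poly poly) + zz) 1 = 0" by simp
  thus False by (simp add: yy_def zz_def)
qed

lemma denom_factored: "(2::'k::idom) = 0 \<Longrightarrow> (denom::'k tpoly) = [:-yy,1:] * [:-zz,1:] * [:yy + zz:]"
proof -
  assume c: "(2::'k) = 0"
  have "(2::'k poly poly) = 0" using char2_poly[OF char2_poly[OF c]] .
  hence n: "- (x::'k poly poly) = x" for x by (rule char2_neg)
  show ?thesis unfolding denom_def varX_def varY_yy varZ_zz by (simp add: n one_pCons)
qed

lemma denom_nz: "(2::'k::idom) = 0 \<Longrightarrow> (denom::'k tpoly) \<noteq> 0"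
proof -
  assume c: "(2::'k) = 0"
  have "[:-yy,1:] \<noteq> (0::'k tpoly)" "[:-zz,1:] \<noteq> (0::'k tpoly)" "[:yy+zz:] \<noteq> (0::'k tpoly)"
    using yy_zz_nz by auto
  thus ?thesis by (simp only: denom_factored[OF c] mult_eq_0_iff) simp
qed

lemma numer_factor_xy_xz:
  assumes c: "(2::'k::idom) = 0"
  obtains M where "(numer j :: 'k tpoly) = [:-yy,1:] * [:-zz,1:] * M"
proof -
  have c2: "(2::'k poly poly) = 0" using char2_poly[OF char2_poly[OF c]] .
  have "\<forall>b\<in>{yy,zz}. poly (numer j) b = (0::'k poly poly)"
    by (simp add: poly_numer c2)
  from roots_prod_dvd[OF _ this] have "(\<Prod>b\<in>{yy,zz}. [:-b,1:]) dvd (numer j :: 'k tpoly)" by simp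
  moreover have "(\<Prod>b\<in>{yy,zz}. [:-b,1:]) = [:-yy,1:] * [:-zz,1::'k poly poly:]"
    using yy_ne_zz[where 'k='k] by (subst prod.insert) auto
  ultimately show ?thesis using that by (auto elim!: dvdE)
qed

text \<open>The remaining factor y + z: substituting y := z kills N_j, hence also its quotient by
  (x + y)(x + z), whose image is then zero.\<close>
lemma numer_cofactor_y_plus_z:
  assumes c: "(2::'k::field) = 0" and M: "(numer j :: 'k tpoly) = [:-yy,1:] * [:-zz,1:] * M"
  shows "[:yy + zz:] dvd M"
proof -
  have c1: "(2::'k poly) = 0" using char2_poly[OF c] .
  have c2: "(2::'k poly poly) = 0" using char2_poly[OF c1] .
  define z' where "z' = ([:0,1:] :: 'k poly)"
  define psi where "psi c = poly c z'" for c :: "'k poly poly"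
  have rpsi: "is_ring_hom psi" unfolding psi_def[abs_def] by (rule is_ring_hom_poly)
  have rPsi: "is_ring_hom (map_poly psi)" by (rule is_ring_hom_map_poly[OF rpsi])
  have psi_yy: "psi yy = z'" and psi_zz: "psi zz = z'" by (simp_all add: psi_def yy_def zz_def z'_def)
  have psi0: "psi 0 = 0" and psi1: "psi 1 = 1" using is_ring_homD[OF rpsi] by auto
  have PX: "map_poly psi varX = [:0,1:]" by (simp add: varX_def map_poly_pCons psi0 psi1 one_pCons[symmetric])
  have PY: "map_poly psi varY = [:z':]" by (simp add: varY_yy map_poly_pCons psi0 psi_yy)
  have PZ: "map_poly psi varZ = [:z':]" by (simp add: varZ_zz map_poly_pCons psi0 psi_zz)
  have "map_poly psi (numer j) = 0"
    unfolding numer_def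
    by (simp add: is_ring_homD[OF rPsi] ring_hom_power[OF rPsi] PX PY PZ add.assoc
        char2_add_self[OF char2_poly[OF c1]] c2)
  moreover have "map_poly psi ([:-yy,1:] * [:-zz,1:]) = [:-z',1:] * [:-z',1:]"
  proof -
    have "map_poly psi [:-yy,1:] = [:-z',1:]" "map_poly psi [:-zz,1:] = [:-z',1:]"
      by (simp_all add: map_poly_pCons psi0 psi1 psi_yy psi_zz ring_hom_minus[OF rpsi])
    thus ?thesis by (simp only: is_ring_homD(4)[OF rPsi])
  qed
  ultimately have "[:-z',1:] * [:-z',1:] * map_poly psi M = 0"
    using M is_ring_homD(4)[OF rPsi] by metis
  hence PM: "map_poly psi M = 0" by (simp only: mult_eq_0_iff) simp
  have "yy + zz dvd coeff M i" for i
  proof -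
    have "psi (coeff M i) = 0" using PM psi0 by (metis coeff_0 coeff_map_poly)
    hence "[:-z',1:] dvd coeff M i" unfolding psi_def by (simp add: poly_eq_0_iff_dvd)
    moreover have "[:-z',1:] = yy + zz" using char2_neg[OF c1, of z']
      by (simp add: yy_def zz_def z'_def)
    ultimately show ?thesis by simp
  qed
  thus ?thesis by (simp add: const_poly_dvd_iff)
qed

lemma denom_dvd_numer:
  assumes c: "(2::'k::field) = 0"
  shows "(denom::'k tpoly) dvd numer j"
proof -
  obtain M where M: "(numer j :: 'k tpoly) = [:-yy,1:] * [:-zz,1:] * M"
    using numer_factor_xy_xz[OF c] .
  show ?thesis unfolding denom_factored[OF c] M
    by (rule mult_dvd_mono[OF dvd_refl numer_cofactor_y_plus_z[OF c M]])
qed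

definition numer_of :: "'k::comm_ring_1 poly \<Rightarrow> 'k tpoly" where
  "numer_of f = subst3 f varX + subst3 f varY + subst3 f varZ + subst3 f (varX + varY + varZ)"

lemma subst3_sum: "subst3 (f::'k::comm_ring_1 poly) t = (\<Sum>j\<le>degree f. tconst (coeff f j) * t ^ j)"
proof -
  have inj: "tconst c = 0 \<longleftrightarrow> c = (0::'k)" for c by (simp add: tconst_def)
  have "degree (map_poly tconst f) = degree f" by (rule degree_map_poly) (simp add: inj)
  thus ?thesis unfolding subst3_def by (simp add: poly_altdef coeff_map_poly)
qed

lemma numer_of_sum: "numer_of (f::'k::comm_ring_1 poly) = (\<Sum>j\<le>degree f. tconst (coeff f j) * numer j)"
  unfolding numer_of_def subst3_sum numer_def by (simp add: sum.distrib algebra_simps)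

lemma numer_of_monom: "numer_of (monom 1 j :: 'k::comm_ring_1 poly) = numer j"
  unfolding numer_of_def numer_def subst3_def by (simp add: map_poly_monom poly_monom)

lemma phi_of_eq:
  assumes "(2::'k::field) = 0"
  shows "denom * phi_of (f::'k poly) = numer_of f"
proof -
  have "denom dvd numer_of f" unfolding numer_of_sum
    by (intro dvd_sum dvd_mult denom_dvd_numer[OF assms])
  moreover have "phi_of f = numer_of f div denom" unfolding phi_of_def numer_of_def denom_def by simp
  ultimately show ?thesis by simp
qed


lemma phi_j_eq: "(2::'k::field) = 0 \<Longrightarrow> denom * phi_j j = (numer j :: 'k tpoly)"
  using phi_of_eq[of "monom 1 j"] by (simp add: phi_j_def numer_of_monom)

lemma homog_parts_phi_j:
  assumes "(2::'k::field) = 0"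
  shows "homog_parts (phi_j j :: 'k tpoly) = monom (phi_j j) (j - 3) \<and> (j < 3 \<longrightarrow> (phi_j j :: 'k tpoly) = 0)"
proof -
  have "denom * phi_j j = (numer j :: 'k tpoly)" by (rule phi_j_eq[OF assms])
  from homog_parts_quotient[OF this denom_nz[OF assms] homog_parts_numer] show ?thesis .
qed

lemma numer_4_eq_0: "(2::'k::comm_ring_1) = 0 \<Longrightarrow> (numer 4 :: 'k tpoly) = 0"
proof -
  assume c: "(2::'k) = 0"
  have c3: "(2::'k tpoly) = 0" using char2_poly[OF char2_poly[OF char2_poly[OF c]]] .
  have f: "(a + b)^4 = a^4 + b^4" for a b :: "'k tpoly"
    using frobenius_add[OF c3, of a b 2] by simp
  have "(numer 4 :: 'k tpoly) = 2 * (varX^4 + varY^4 + varZ^4)" unfolding numer_def f by (simp only: mult_2)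
  thus ?thesis using c3 by simp
qed

text \<open>phi_4 = 0 in characteristic 2: no phi_j is homogeneous of degree 1.\<close>
lemma phi_j_4_eq_0:
  assumes c: "(2::'k::field) = 0" shows "(phi_j 4 :: 'k tpoly) = 0"
proof -
  have "denom * phi_j 4 = (0::'k tpoly)" using phi_j_eq[OF c, of 4] numer_4_eq_0[OF c] by simp
  thus ?thesis using denom_nz[OF c] by simp
qed

lemma phi_of_sum:
  assumes c: "(2::'k::field) = 0"
  shows "phi_of f = (\<Sum>j\<le>degree f. tconst (coeff f j) * (phi_j j :: 'k tpoly))"
proof -
  have "denom * phi_of f = (\<Sum>j\<le>degree f. tconst (coeff f j) * numer j)"
    using phi_of_eq[OF c] numer_of_sum by metis
  also have "\<dots> = denom * (\<Sum>j\<le>degree f. tconst (coeff f j) * phi_j j)"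
    unfolding sum_distrib_left by (rule sum.cong) (simp_all add: phi_j_eq[OF c, symmetric] ac_simps)
  finally show ?thesis using denom_nz[OF c] by simp
qed

lemma const_mult_monom: "[:c::'a::comm_ring_1:] * monom a n = monom (c * a) n"
  by (simp add: monom_0[symmetric] mult_monom)

lemma sum_shifted_index:
  fixes T :: "nat \<Rightarrow> 'b::comm_monoid_add"
  assumes "\<And>j. j < 3 \<Longrightarrow> T j = 0"
  shows "(\<Sum>j\<le>d. if j - 3 = i then T j else 0) = (if i + 3 \<le> d then T (i+3) else 0)"
proof -
  have "(\<Sum>j\<le>d. if j - 3 = i then T j else 0) = (\<Sum>j\<le>d. if j = i + 3 then T j else 0)"
    by (rule sum.cong) (auto simp: assms)
  also have "\<dots> = (if i + 3 \<le> d then T (i+3) else 0)" by (simp add: sum.delta)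
  finally show ?thesis .
qed

lemma coeff_homog_parts_phi_of:
  assumes c: "(2::'k::field) = 0"
  shows "coeff (homog_parts (phi_of f)) i = tconst (coeff f (i + 3)) * (phi_j (i + 3) :: 'k tpoly)"
proof -
  define T where "T j = tconst (coeff f j) * (phi_j j :: 'k tpoly)" for j
  have phi: "phi_of f = (\<Sum>j\<le>degree f. T j)" unfolding T_def by (rule phi_of_sum[OF c])
  have hT: "homog_parts (T j) = monom (T j) (j - 3)" for j
    unfolding T_def homog_parts_mult homog_parts_tconst using homog_parts_phi_j[OF c, of j]
    by (simp add: const_mult_monom smult_monom)
  have T3: "j < 3 \<Longrightarrow> T j = 0" for j unfolding T_def using homog_parts_phi_j[OF c, of j] by simp
  have "coeff (homog_parts (phi_of f)) i = (\<Sum>j\<le>degree f. if j - 3 = i then T j else 0)"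
    unfolding phi ring_hom_sum[OF is_ring_hom_homog_parts] hT coeff_sum by (simp add: coeff_monom)
  also have "\<dots> = (if i + 3 \<le> degree f then T (i + 3) else 0)" by (rule sum_shifted_index[OF T3])
  also have "\<dots> = T (i + 3)" unfolding T_def by (auto simp: coeff_eq_0)
  finally show ?thesis unfolding T_def .
qed


section \<open>The splitting of phi_(2^k+1) over an algebraically closed field\<close>

lemma pderiv_sq: "pderiv (L * L * W) = L * (L * pderiv W + 2 * (W * pderiv (L::'K::idom poly)))"
  by (simp add: pderiv_mult algebra_simps mult_2)

lemma card_roots_separable:
  fixes P :: "'K::alg_closed_field poly"
  assumes Pnz: "P \<noteq> 0" and sep: "\<And>x. poly P x = 0 \<Longrightarrow> poly (pderiv P) x \<noteq> 0"
  shows "finite {x. poly P x = 0} \<and> card {x. poly P x = 0} = degree P"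
proof -
  define F where "F = {x. poly P x = 0}"
  have finF: "finite F" unfolding F_def using poly_roots_finite[OF Pnz] .
  have "\<forall>b\<in>F. poly P b = 0" unfolding F_def by simp
  from roots_prod_dvd[OF finF this] obtain M where M: "P = (\<Prod>b\<in>F. [:-b,1:]) * M" by (auto elim: dvdE)
  have Mnz: "M \<noteq> 0" using Pnz M by auto
  have "degree M = 0"
  proof (rule ccontr)
    assume "degree M \<noteq> 0"
    then obtain \<beta> where \<beta>: "poly M \<beta> = 0" using alg_closed_imp_poly_has_root by blast
    hence bF: "\<beta> \<in> F" unfolding F_def using M by simp
    obtain M' where M': "M = [:-\<beta>,1:] * M'" using \<beta> by (auto simp: poly_eq_0_iff_dvd elim: dvdE)
    have rem: "(\<Prod>b\<in>F. [:-b,1:]) = [:-\<beta>,1:] * (\<Prod>b\<in>F-{\<beta>}. [:-b,1:])"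
      using finF bF by (rule prod.remove)
    have Pf: "P = [:-\<beta>,1:] * [:-\<beta>,1:] * ((\<Prod>b\<in>F-{\<beta>}. [:-b,1:]) * M')"
      unfolding M M' rem by (simp only: ac_simps)
    have "poly [:-\<beta>,1:] \<beta> = 0" by simp
    hence "poly (pderiv P) \<beta> = 0" unfolding Pf pderiv_sq by (simp only: poly_mult mult_zero_left)
    thus False using sep bF unfolding F_def by blast
  qed
  moreover have "degree P = card F + degree M"
    using M Mnz by (simp add: degree_mult_eq linprod_nz degree_linprod finF)
  ultimately show ?thesis using finF unfolding F_def by simp
qed

text \<open>An algebraically closed field of characteristic 2 has exactly 2^k elements fixed by the
  k-th power of Frobenius (namely the copy of F_(2^k)), since x^(2^k) - x has derivative -1.\<close>
lemma card_frobenius_fixed: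
  assumes c: "(2::'K::alg_closed_field) = 0" and k: "k \<ge> 1"
  shows "finite {a::'K. a^(2^k) = a} \<and> card {a::'K. a^(2^k) = a} = 2^k"
proof -
  define q where "q = (2::nat)^k"
  have q2: "q \<ge> 2" unfolding q_def using k by (simp add: self_le_power order_trans[of 2 "2^1"] power_increasing)
  define P where "P = monom (1::'K) q - [:0,1:]"
  have cP: "coeff P q = 1" using q2 unfolding P_def by (simp add: coeff_pCons split: nat.splits)
  hence Pnz: "P \<noteq> 0" by auto
  have dP: "degree P = q"
  proof (rule antisym)
    show "degree P \<le> q" unfolding P_def using q2
      by (intro degree_diff_le) (auto simp: degree_monom_le)
    show "q \<le> degree P" using cP by (simp add: le_degree)
  qed
  have "(of_nat q :: 'K) = 0" unfolding q_def using c k by simp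
  hence "pderiv P = -1" unfolding P_def pderiv_diff pderiv_monom by (simp add: pderiv_pCons one_pCons)
  hence "finite {x. poly P x = 0} \<and> card {x. poly P x = 0} = q"
    using card_roots_separable[OF Pnz] dP by simp
  moreover have "{x. poly P x = 0} = {a. a^q = a}" unfolding P_def by (auto simp: poly_monom)
  ultimately show ?thesis unfolding q_def by simp
qed

text \<open>The identity behind the roots rr a: after applying Frobenius the four terms of N_(2^k+1)
  combine into multiples of 2.\<close>
lemma key_identity:
  fixes a b y z Y Z :: "'b::comm_ring_1"
  shows "(a*y+b*z)*(a*Y+b*Z) + y*Y + z*Z + (b*y+a*z)*(b*Y+a*Z)
         = (a*a + b*b + 1)*(y*Y+z*Z) + 2*(a*b*(y*Z+z*Y))"
  by (simp add: algebra_simps mult_2)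

text \<open>The roots of N_(2^k+1) in x: the linear forms a y + (1 + a) z with a^(2^k) = a.\<close>
definition cst :: "'k::comm_ring_1 \<Rightarrow> 'k poly poly" where "cst a = [:[:a:]:]"
definition rr :: "'k::comm_ring_1 \<Rightarrow> 'k poly poly" where "rr a = cst a * yy + cst (1+a) * zz"

lemma rr_coeff: "coeff (coeff (rr a) 1) 0 = a"
  by (simp add: rr_def cst_def yy_def zz_def)

lemma rr_1: "(2::'k::comm_ring_1) = 0 \<Longrightarrow> rr (1::'k) = yy"
  by (simp add: rr_def cst_def one_pCons yy_def zz_def)

lemma rr_0: "rr 0 = zz"
  by (simp add: rr_def cst_def flip: one_pCons)

lemma cst_power: "cst a ^ n = cst (a ^ n)" by (simp add: cst_def poly_const_pow)
lemma cst_1add: "cst (1 + a) = 1 + cst a" by (simp add: cst_def one_pCons)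

lemma numer_root:
  fixes a :: "'k::comm_ring_1"
  assumes c: "(2::'k) = 0" and a: "a^(2^k) = a"
  shows "poly (numer (2^k+1)) (rr a) = 0"
proof -
  define Q where "Q = (2::nat)^k"
  have c2: "(2::'k poly poly) = 0" using char2_poly[OF char2_poly[OF c]] .
  define A where "A = cst a"
  define B where "B = cst (1 + a)"
  have AQ: "A^Q = A" unfolding A_def Q_def cst_power using a by simp
  have "(1 + a)^Q = 1 + a" unfolding Q_def using frobenius_add[OF c, of 1 a k] a by simp
  hence BQ: "B^Q = B" unfolding B_def cst_power by simp
  have B1: "B = 1 + A" unfolding A_def B_def by (rule cst_1add)
  have r: "rr a = A*yy + B*zz" unfolding rr_def A_def B_def ..
  have rQ: "(A*yy + B*zz)^Q = A*yy^Q + B*zz^Q"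
    unfolding Q_def using frobenius_add[OF c2, of "A*yy" "B*zz" k] AQ BQ unfolding Q_def
    by (simp add: power_mult_distrib)
  have s: "A*yy + B*zz + yy + zz = B*yy + A*zz + 2*zz" unfolding B1 by (simp add: algebra_simps mult_2)
  hence s': "A*yy + B*zz + yy + zz = B*yy + A*zz" using c2 by simp
  have sQ: "(B*yy + A*zz)^Q = B*yy^Q + A*zz^Q"
    unfolding Q_def using frobenius_add[OF c2, of "B*yy" "A*zz" k] AQ BQ unfolding Q_def
    by (simp add: power_mult_distrib)
  have "poly (numer (Q+1)) (rr a) = (A*yy + B*zz) * (A*yy + B*zz)^Q + yy * yy^Q + zz * zz^Q
        + (B*yy + A*zz) * (B*yy + A*zz)^Q"
    unfolding poly_numer r s' by simp
  also have "\<dots> = (A*yy+B*zz)*(A*yy^Q+B*zz^Q) + yy*yy^Q + zz*zz^Q + (B*yy+A*zz)*(B*yy^Q+A*zz^Q)"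
    unfolding rQ sQ ..
  also have "\<dots> = (A*A + B*B + 1)*(yy*yy^Q+zz*zz^Q) + 2*(A*B*(yy*zz^Q+zz*yy^Q))"
    by (rule key_identity)
  also have "A*A + B*B + 1 = 2 * (A*A + A + 1)" unfolding B1 by (simp add: algebra_simps mult_2)
  also have "2 * (A*A + A + 1) * (yy*yy^Q+zz*zz^Q) + 2*(A*B*(yy*zz^Q+zz*yy^Q)) = 0"
    using c2 by simp
  finally show ?thesis unfolding Q_def .
qed

lemma numer_succ_expansion:
  fixes xx yv zv :: "'b::comm_ring_1" and Q :: nat
  assumes c: "(2::'b) = 0" and fQ: "\<And>a b::'b. (a+b)^Q = a^Q + b^Q"
  shows "xx^(Q+1) + yv^(Q+1) + zv^(Q+1) + (xx+yv+zv)^(Q+1)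
       = (yv+zv)*xx^Q + (yv+zv)^Q*xx + (yv^(Q+1) + zv^(Q+1) + (yv+zv)^Q * (yv+zv))"
proof -
  define ww where "ww = yv + zv"
  have e1: "(xx+yv+zv)^(Q+1) = (xx^Q + ww^Q) * (xx + ww)"
    by (simp only: ww_def add.assoc power_add power_one_right fQ)
  have "xx^(Q+1) + yv^(Q+1) + zv^(Q+1) + (xx+yv+zv)^(Q+1)
       = ww*xx^Q + ww^Q*xx + (yv^(Q+1) + zv^(Q+1) + ww^Q * ww) + 2 * (xx^Q * xx)"
  proof -
    have atoms: "p*x + y1 + z1 + (p + r)*(x+w) = w*p + r*x + (y1 + z1 + r*w) + 2*(p*x)"
      for p x y1 z1 r w :: 'b by (simp add: algebra_simps mult_2)
    show ?thesis unfolding e1 unfolding power_add power_one_right by (rule atoms)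
  qed
  thus ?thesis using c unfolding ww_def by simp
qed

lemma numer_degree:
  assumes c: "(2::'k::idom) = 0" and k: "k \<ge> 1"
  shows "degree (numer (2^k+1) :: 'k tpoly) = 2^k \<and> lead_coeff (numer (2^k+1) :: 'k tpoly) = yy + zz"
proof -
  define Q where "Q = (2::nat)^k"
  have Q2: "Q \<ge> 2" unfolding Q_def using k by (simp add: self_le_power order_trans[of 2 "2^1"] power_increasing)
  have c3: "(2::'k tpoly) = 0" using char2_poly[OF char2_poly[OF char2_poly[OF c]]] .
  have fQ: "(a+b)^Q = a^Q + b^Q" for a b :: "'k tpoly" unfolding Q_def by (rule frobenius_add[OF c3])
  define s where "s = (yy + zz :: 'k poly poly)"
  define e where "e = yy^(Q+1) + zz^(Q+1) + s^Q * s"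
  have vx: "varX = (monom 1 1 :: 'k tpoly)" by (simp add: varX_def monom_altdef)
  have vyz: "varY + varZ = ([:s:] :: 'k tpoly)" by (simp add: varY_yy varZ_zz s_def)
  have "(numer (Q+1) :: 'k tpoly) = (varY+varZ)*varX^Q + (varY+varZ)^Q*varX
        + (varY^(Q+1) + varZ^(Q+1) + (varY+varZ)^Q * (varY+varZ))"
    unfolding numer_def by (rule numer_succ_expansion[OF c3 fQ])
  also have "\<dots> = monom s Q + monom (s^Q) 1 + monom e 0"
    unfolding vyz unfolding vx varY_yy varZ_zz monom_power poly_const_pow
    by (simp add: const_mult_monom e_def monom_0 smult_monom mult.commute[of "s^Q" s])
  finally have N: "(numer (Q+1) :: 'k tpoly) = monom s Q + monom (s^Q) 1 + monom e 0" .
  have snz: "s \<noteq> 0" unfolding s_def by (rule yy_zz_nz)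
  have cq: "coeff (numer (Q+1) :: 'k tpoly) Q = s" unfolding N using Q2 by (simp add: coeff_monom)
  have "degree (numer (Q+1) :: 'k tpoly) \<le> Q" unfolding N using Q2
    by (intro degree_add_le) (auto simp: degree_monom_le intro: order_trans[OF degree_monom_le])
  moreover have "Q \<le> degree (numer (Q+1) :: 'k tpoly)" using cq snz by (simp add: le_degree)
  ultimately have "degree (numer (Q+1) :: 'k tpoly) = Q" by simp
  thus ?thesis using cq unfolding Q_def s_def by simp
qed

lemma numer_split:
  assumes c: "(2::'K::alg_closed_field) = 0" and k: "k \<ge> 1"
  obtains R where "finite R" "card R = 2^k" "yy \<in> R" "zz \<in> R"
    "(numer (2^k+1) :: 'K tpoly) = (\<Prod>\<rho>\<in>R. [:-\<rho>,1:]) * [:yy + zz:]"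
proof -
  define Q where "Q = (2::nat)^k"
  have Q2: "Q \<ge> 2" unfolding Q_def using k by (simp add: self_le_power order_trans[of 2 "2^1"] power_increasing)
  define F where "F = {a::'K. a^Q = a}"
  have finF: "finite F" and cF: "card F = Q" using card_frobenius_fixed[OF c k] unfolding F_def Q_def by auto
  have inj: "inj_on rr F" by (rule inj_onI) (metis rr_coeff)
  define R where "R = rr ` F"
  have finR: "finite R" unfolding R_def using finF by simp
  have cR: "card R = Q" unfolding R_def using card_image[OF inj] cF by simp
  have "\<forall>\<rho>\<in>R. poly (numer (Q+1) :: 'K tpoly) \<rho> = 0"
    unfolding R_def F_def Q_def using numer_root[OF c] by auto
  from roots_prod_dvd[OF finR this] obtain M where M: "(numer (Q+1) :: 'K tpoly) = (\<Prod>\<rho>\<in>R. [:-\<rho>,1:]) * M"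
    by (auto elim: dvdE)
  have dN: "degree (numer (Q+1) :: 'K tpoly) = Q" and lN: "lead_coeff (numer (Q+1) :: 'K tpoly) = yy + zz"
    using numer_degree[OF c k] unfolding Q_def by auto
  have Mnz: "M \<noteq> 0" using M lN yy_zz_nz by auto
  have "degree (numer (Q+1) :: 'K tpoly) = card R + degree M"
    using M Mnz by (simp add: degree_mult_eq linprod_nz degree_linprod finR)
  hence "degree M = 0" using dN cR by simp
  then obtain m where m: "M = [:m:]" by (rule degree_eq_zeroE)
  have "lead_coeff (numer (Q+1) :: 'K tpoly) = m" using M m by (simp add: lead_coeff_mult monic_linprod)
  hence "M = [:yy + zz:]" using lN m by simp
  moreover have "yy \<in> R" unfolding R_def F_def using rr_1[OF c] by (metis (mono_tags) image_eqI mem_Collect_eq power_one)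
  moreover have "zz \<in> R" unfolding R_def F_def using rr_0 Q2
    by (metis (mono_tags, lifting) image_eqI mem_Collect_eq zero_power not_numeral_le_zero gr0I)
  ultimately show ?thesis using that finR cR M unfolding Q_def by blast
qed

lemma phi_j_split:
  assumes c: "(2::'K::alg_closed_field) = 0" and k: "k \<ge> 1"
  obtains A where "finite A" "card A = 2^k - 2" "(phi_j (2^k+1) :: 'K tpoly) = (\<Prod>a\<in>A. [:-a,1:])"
proof -
  obtain R where finR: "finite R" and cR: "card R = 2^k" and yR: "yy \<in> R" and zR: "zz \<in> R"
    and N: "(numer (2^k+1) :: 'K tpoly) = (\<Prod>\<rho>\<in>R. [:-\<rho>,1:]) * [:yy + zz:]"
    using numer_split[OF c k] .
  define A where "A = R - {yy} - {zz}"
  have finA: "finite A" unfolding A_def using finR by simp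
  have cA: "card A = 2^k - 2" unfolding A_def using cR yR zR yy_ne_zz[where 'k='K]
    by (auto simp add: card_Diff_singleton_if finR numeral_2_eq_2)
  have p1: "(\<Prod>\<rho>\<in>R. [:-\<rho>,1:]) = [:-yy,1:] * (\<Prod>\<rho>\<in>R-{yy}. [:-\<rho>,1::'K poly poly:])"
    using finR yR by (rule prod.remove)
  have p2: "(\<Prod>\<rho>\<in>R-{yy}. [:-\<rho>,1:]) = [:-zz,1:] * (\<Prod>\<rho>\<in>A. [:-\<rho>,1::'K poly poly:])"
    unfolding A_def using finR zR yy_ne_zz[where 'k='K] by (intro prod.remove) auto
  have "denom * phi_j (2^k+1) = (numer (2^k+1) :: 'K tpoly)" by (rule phi_j_eq[OF c])
  also have "\<dots> = denom * (\<Prod>\<rho>\<in>A. [:-\<rho>,1:])"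
    unfolding denom_factored[OF c] N p1 p2 by (simp only: ac_simps)
  finally have "phi_j (2^k+1) = (\<Prod>\<rho>\<in>A. [:-\<rho>,1::'K poly poly:])" using denom_nz[OF c] by simp
  thus ?thesis using that finA cA by blast
qed


section \<open>Transfer along field embeddings\<close>

text \<open>phi_of commutes with mapping the coefficients along a homomorphism of fields of
  characteristic 2: both sides are the exact quotient of the same numerator.\<close>
lemma phi_of_map_poly:
  fixes h :: "'a::field \<Rightarrow> 'b::field"
  assumes hom: "is_ring_hom h" and c: "(2::'a) = 0"
  shows "map_poly (map_poly (map_poly h)) (phi_of f) = phi_of (map_poly h f)"
proof -
  define H where "H = map_poly (map_poly (map_poly h))"
  have m1: "is_ring_hom (map_poly h)" by (rule is_ring_hom_map_poly[OF hom])
  have m2: "is_ring_hom (map_poly (map_poly h))" by (rule is_ring_hom_map_poly[OF m1])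
  have rH: "is_ring_hom H" unfolding H_def by (rule is_ring_hom_map_poly[OF m2])
  have "(2::'b) = h 2" using is_ring_homD(3)[OF hom, of 1 1] is_ring_homD(2)[OF hom] by (simp add: one_add_one)
  hence cb: "(2::'b) = 0" using c is_ring_homD(1)[OF hom] by simp
  have HX: "H varX = varX" unfolding H_def varX_def by (simp add: map_poly_pCons is_ring_homD[OF m2])
  have HY: "H varY = varY" unfolding H_def varY_def
    by (simp add: map_poly_pCons is_ring_homD[OF m1] is_ring_homD[OF m2])
  have HZ: "H varZ = varZ" unfolding H_def varZ_def by (simp add: map_poly_pCons is_ring_homD[OF hom])
  have HT: "H (tconst a) = tconst (h a)" for a
    unfolding H_def tconst_def by (simp add: map_poly_pCons is_ring_homD[OF hom])
  have HN: "H (numer j) = numer j" for j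
    unfolding numer_def by (simp add: is_ring_homD[OF rH] ring_hom_power[OF rH] HX HY HZ)
  have HD: "H denom = denom" unfolding denom_def by (simp add: is_ring_homD[OF rH] HX HY HZ)
  have deg: "degree (map_poly h f) = degree f"
    by (rule degree_map_poly) (simp add: ring_hom_eq_0_iff[OF hom])
  have "denom * H (phi_of f) = H (numer_of f)"
    using phi_of_eq[OF c, of f] is_ring_homD(4)[OF rH, of denom] HD by metis
  also have "\<dots> = numer_of (map_poly h f)"
    unfolding numer_of_sum ring_hom_sum[OF rH] is_ring_homD(4)[OF rH] HT HN deg
    by (simp add: coeff_map_poly is_ring_homD[OF hom])
  also have "\<dots> = denom * phi_of (map_poly h f)" by (rule phi_of_eq[OF cb, symmetric])
  finally show ?thesis using denom_nz[OF cb] unfolding H_def by simp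
qed

section \<open>Irreducibility of phi\<close>

lemma irreducible_if_small_factors_unit:
  fixes p :: "'a::comm_semiring_1" and \<mu> :: "'a \<Rightarrow> nat"
  assumes "p \<noteq> 0" "\<not> p dvd 1" and small: "\<And>a b. p = a * b \<Longrightarrow> \<mu> b \<le> \<mu> a \<Longrightarrow> b dvd 1"
  shows "irreducible p"
proof (rule irreducibleI)
  fix a b assume ab: "p = a * b"
  show "a dvd 1 \<or> b dvd 1"
  proof (cases "\<mu> b \<le> \<mu> a")
    case True thus ?thesis using small[OF ab] by blast
  next
    case False
    have "p = b * a" using ab by (simp add: mult.commute)
    thus ?thesis using small False by fastforce
  qed
qed (use assms in auto)

lemma nonunit_if_homog_degree:
  fixes h :: "'k::idom tpoly"
  assumes "degree (homog_parts h) \<ge> 1"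
  shows "h \<noteq> 0 \<and> \<not> h dvd 1"
proof
  show "h \<noteq> 0" using assms by (auto simp: is_ring_homD(1)[OF is_ring_hom_homog_parts])
  show "\<not> h dvd 1"
  proof
    assume "h dvd 1"
    then obtain v where "homog_parts h = [:v:]" using homog_parts_unit by blast
    thus False using assms by simp
  qed
qed

lemma tconst_unit: "(a::'k::field) \<noteq> 0 \<Longrightarrow> tconst a dvd 1"
  using is_ring_homD(4)[OF is_ring_hom_tconst, of a "inverse a"] by (metis dvd_triv_left right_inverse tconst_1)

lemma small_factor_homogeneous:
  fixes \<phi> P Q :: "'K::idom tpoly" and A :: "'K poly poly set"
  assumes deg: "degree (homog_parts \<phi>) = D"
    and lead: "lead_coeff (homog_parts \<phi>) = (\<Prod>a\<in>A. [:-a,1:])" and fin: "finite A" and card: "card A = D"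
    and gap: "\<And>i. D \<le> 2 * i \<Longrightarrow> i < D \<Longrightarrow> coeff (homog_parts \<phi>) i = 0"
    and fac: "\<phi> = P * Q" and le: "degree (homog_parts Q) \<le> degree (homog_parts P)"
  obtains c B where "homog_parts Q = monom Q (card B)" "Q = smult c (\<Prod>a\<in>B. [:-a,1:])"
    "c dvd 1" "finite B"
proof -
  define s where "s = degree (homog_parts P)"
  define t where "t = degree (homog_parts Q)"
  have SPQ: "homog_parts \<phi> = homog_parts P * homog_parts Q" unfolding fac homog_parts_mult ..
  have "homog_parts \<phi> \<noteq> 0" using lead linprod_nz by force
  hence "homog_parts P \<noteq> 0" "homog_parts Q \<noteq> 0" using SPQ by auto
  hence st: "s + t = D" unfolding s_def t_def using deg SPQ by (simp add: degree_mult_eq)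
  have ts: "t \<le> s" using le unfolding s_def t_def .
  have z: "coeff (homog_parts P * homog_parts Q) (s + t - n) = 0" if "1 \<le> n" "n \<le> t" for n
    unfolding SPQ[symmetric] st using that st ts by (intro gap) auto
  have lead': "lead_coeff (homog_parts P) * lead_coeff (homog_parts Q) = (\<Prod>a\<in>A. [:-a,1:])"
    using lead SPQ by (simp add: lead_coeff_mult)
  obtain c B where SQ: "homog_parts Q = monom (lead_coeff (homog_parts Q)) t" and cu: "c dvd 1"
    and BA: "B \<subseteq> A" and cB: "card B = t"
    and lQ: "lead_coeff (homog_parts Q) = smult c (\<Prod>a\<in>B. [:-a,1:])"
    using gap_forces_monomial_factor[OF s_def[symmetric] t_def[symmetric] ts z lead' fin _
        homog_parts_xdeg homog_parts_xdeg] card st by auto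
  have "Q = poly (homog_parts Q) 1" by (simp add: poly_homog_parts_1)
  also have "\<dots> = lead_coeff (homog_parts Q)" by (subst SQ) (simp add: poly_monom)
  finally have Q: "Q = lead_coeff (homog_parts Q)" .
  show thesis
    using that[of B c] SQ cB lQ cu finite_subset[OF BA fin] unfolding Q[symmetric] by simp
qed

text \<open>A nonunit homogeneous factor Q of an irreducible phi_j which is a product of linear
  factors in x cannot exist: Q would be associate to phi_j, hence a single linear factor, so
  phi_j would be homogeneous of degree 1, i.e. j = 4; but phi_4 = 0.\<close>
lemma no_homogeneous_factor_of_phi_j:
  fixes Q :: "'K::field tpoly"
  assumes c: "(2::'K) = 0" and irr: "irreducible (phi_j j :: 'K tpoly)"
    and dvd: "Q dvd phi_j j" and nu: "\<not> Q dvd 1"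
    and hQ: "homog_parts Q = monom Q (card B)" and Qform: "Q = smult u (\<Prod>a\<in>B. [:-a,1:])"
    and u: "u dvd 1" and fin: "finite B"
  shows False
proof -
  obtain w where w: "phi_j j = Q * w" using dvd by (rule dvdE)
  have wu: "w dvd 1" using irreducibleD[OF irr w] nu by blast
  have "irreducible (w * Q)" using irr unfolding w by (simp add: mult.commute)
  hence "irreducible Q" using irreducible_mult_unit_left[OF wu] by simp
  hence "card B = 1" using irreducible_linprod_card[OF _ u fin] Qform by simp
  obtain v where v: "v \<noteq> 0" "homog_parts w = [:v:]" using homog_parts_unit[OF wu] by blast
  have phinz: "(phi_j j :: 'K tpoly) \<noteq> 0" using irr by auto
  hence j3: "j \<ge> 3" using homog_parts_phi_j[OF c, of j] by (cases "j < 3") auto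
  have "monom (phi_j j) (j - 3) = homog_parts Q * homog_parts w"
    using homog_parts_phi_j[OF c, of j] w homog_parts_mult by metis
  also have "\<dots> = monom (v * Q) 1" unfolding hQ v(2) \<open>card B = 1\<close>
    by (simp only: mult.commute[of "monom Q 1"] const_mult_monom)
  finally have "j - 3 = 1" using phinz v(1) w by (metis degree_monom_eq mult_eq_0_iff mult_zero_left)
  hence "j = 4" using j3 by simp
  thus False using phi_j_4_eq_0[OF c] phinz by simp
qed

text \<open>Under the hypotheses of the previous two lemmas, if moreover the component of phi of
  degree j - 3 is a nonzero multiple of an irreducible phi_j, then the smaller factor is a unit:
  it divides that component, hence phi_j.\<close>
lemma small_factor_is_unit:
  fixes \<phi> P Q :: "'K::field tpoly" and A :: "'K poly poly set"
  assumes c: "(2::'K) = 0" and deg: "degree (homog_parts \<phi>) = D"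
    and lead: "lead_coeff (homog_parts \<phi>) = (\<Prod>a\<in>A. [:-a,1:])" and fin: "finite A" and card: "card A = D"
    and gap: "\<And>i. D \<le> 2 * i \<Longrightarrow> i < D \<Longrightarrow> coeff (homog_parts \<phi>) i = 0"
    and fac: "\<phi> = P * Q" and le: "degree (homog_parts Q) \<le> degree (homog_parts P)"
    and irr: "irreducible (phi_j j :: 'K tpoly)"
    and cj: "coeff (homog_parts \<phi>) (j - 3) = tconst a * phi_j j" and a: "a \<noteq> 0"
  shows "Q dvd 1"
proof (rule ccontr)
  assume nu: "\<not> Q dvd 1"
  obtain u B where hQ: "homog_parts Q = monom Q (card B)" and Qform: "Q = smult u (\<Prod>a\<in>B. [:-a,1:])"
    and u: "u dvd 1" and finB: "finite B"
    using small_factor_homogeneous[OF deg lead fin card gap fac le] .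
  have "coeff (homog_parts \<phi>) (j - 3) \<noteq> 0" using cj a irr by (auto simp: tconst_def)
  moreover have "coeff (homog_parts \<phi>) (j - 3)
      = (if j - 3 < card B then 0 else Q * coeff (homog_parts P) (j - 3 - card B))"
    unfolding fac homog_parts_mult hQ mult.commute[of "homog_parts P"] coeff_monom_mult ..
  ultimately have "Q dvd tconst a * phi_j j" using cj by (auto split: if_splits)
  hence "Q dvd phi_j j" using tconst_unit[OF a] by (simp add: dvd_mult_unit_iff')
  thus False using no_homogeneous_factor_of_phi_j[OF c irr _ nu hQ Qform u finB] by blast
qed

lemma phi_of_irreducible_alg_closed:
  fixes g :: "'K::alg_closed_field poly"
  assumes c: "(2::'K) = 0" and k: "k \<ge> 2" and dg: "degree g \<le> 2 ^ (k - 1) + 1"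
    and gj0: "coeff g j0 \<noteq> 0" and irr: "irreducible (phi_j j0 :: 'K tpoly)"
  shows "irreducible (phi_of (monom 1 (2 ^ k + 1) + g))"
proof -
  define p where "p = (2::nat) ^ (k - 1)"
  define d where "d = 2 * p + 1"
  define D where "D = 2 * p - 2"
  define f where "f = monom 1 d + g"
  define \<Phi> where "\<Phi> = homog_parts (phi_of f)"
  have pk: "(2::nat) ^ k = 2 * p" unfolding p_def using k by (cases k) auto
  have p2: "p \<ge> 2" unfolding p_def using power_increasing[of 1 "k - 1" "2::nat"] k by simp
  have dgd: "degree g < d" using dg p2 unfolding d_def p_def by simp
  have cf: "coeff f j = (if j = d then 1 else coeff g j)" for j
    unfolding f_def using dgd by (auto simp: coeff_eq_0)
  have c\<Phi>: "coeff \<Phi> i = tconst (coeff f (i + 3)) * phi_j (i + 3)" for i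
    unfolding \<Phi>_def by (rule coeff_homog_parts_phi_of[OF c])
  obtain A where finA: "finite A" and cA: "card A = D" and phiA: "phi_j d = (\<Prod>a\<in>A. [:-a,1::'K poly poly:])"
    using phi_j_split[OF c, of k] k unfolding d_def D_def pk by auto
  have dD: "d = D + 3" using p2 unfolding d_def D_def by simp
  have top: "coeff \<Phi> D = (\<Prod>a\<in>A. [:-a,1:])" using c\<Phi>[of D] cf phiA dD by simp
  have high: "coeff \<Phi> i = 0" if "D < i" for i
    using c\<Phi>[of i] cf[of "i + 3"] that dD dgd by (simp add: coeff_eq_0)
  have gap: "coeff \<Phi> i = 0" if "D \<le> 2 * i" "i < D" for i
    using c\<Phi>[of i] cf[of "i + 3"] that dg dD unfolding D_def p_def by (simp add: coeff_eq_0)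
  have deg\<Phi>: "degree \<Phi> = D"
    using top high linprod_nz by (intro antisym degree_le le_degree) auto
  have j03: "j0 \<ge> 3" using irr homog_parts_phi_j[OF c, of j0] by (cases "j0 < 3") auto
  have cj0: "coeff \<Phi> (j0 - 3) = tconst (coeff g j0) * phi_j j0"
    using c\<Phi>[of "j0 - 3"] cf[of j0] j03 le_degree[OF gj0] dgd by simp
  have "degree (homog_parts (phi_of f)) \<ge> 1" using deg\<Phi> p2 unfolding \<Phi>_def D_def by simp
  hence "phi_of f \<noteq> 0 \<and> \<not> phi_of f dvd 1" by (rule nonunit_if_homog_degree)
  hence "irreducible (phi_of f)"
    using small_factor_is_unit[OF c deg\<Phi>[unfolded \<Phi>_def] _ finA cA gap[unfolded \<Phi>_def] _ _ irr
        cj0[unfolded \<Phi>_def] gj0] top deg\<Phi> unfolding \<Phi>_def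
    by (intro irreducible_if_small_factors_unit[where \<mu> = "\<lambda>h. degree (homog_parts h)"]) auto
  thus ?thesis unfolding f_def d_def pk .
qed

theorem theorem3p1:
  fixes m k :: nat and g :: "'a::{field,finite} poly"
  assumes "card (UNIV :: 'a set) = 2 ^ m"
    and "k \<ge> 2"
    and "degree g \<le> 2 ^ (k - 1) + 1"
    and "\<exists>j. coeff g j \<noteq> 0 \<and> abs_irreducible (phi_j j :: 'a tpoly)"
  shows "abs_irreducible (phi_of (monom 1 (2 ^ k + 1) + g))"
proof -
  obtain j0 where gj0: "coeff g j0 \<noteq> 0" and irr0: "abs_irreducible (phi_j j0 :: 'a tpoly)"
    using assms(4) by blast
  have c: "(2::'a) = 0" by (rule char2_of_card[OF assms(1)])
  have cK: "(2::'a alg_closure) = 0" using c by (metis to_ac_numeral to_ac_0)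
  have hom: "is_ring_hom (to_ac :: 'a \<Rightarrow> 'a alg_closure)" by (simp add: is_ring_hom_def)
  define G where "G = map_poly to_ac g"
  have mapf: "map_poly to_ac (monom 1 (2 ^ k + 1) + g) = monom 1 (2 ^ k + 1) + G"
    unfolding G_def by (simp add: map_poly_add_hom[OF hom] map_poly_monom)
  have "irreducible (phi_j j0 :: 'a alg_closure tpoly)"
    using irr0 unfolding abs_irreducible_def phi_j_def phi_of_map_poly[OF hom c] by (simp add: map_poly_monom)
  moreover have "degree G = degree g" "coeff G j0 \<noteq> 0"
    unfolding G_def using gj0 by (simp_all add: degree_map_poly coeff_map_poly)
  ultimately have "irreducible (phi_of (monom 1 (2 ^ k + 1) + G))"
    using phi_of_irreducible_alg_closed[OF cK assms(2)] assms(3) by simp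
  thus ?thesis unfolding abs_irreducible_def phi_of_map_poly[OF hom c] mapf .
qed

end
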